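(* In an Ehresmann semigroup $S$, we have ${\le_l}\circ{\le_r}={\le_r}\circ{\le_l}$ (as composites of binary relations on $S$).
   Context: A DRC-semigroup is $(S,\cdot,D,R)$, $(S,\cdot)$ a semigroup, $D,R:S\to S$ with, for all $a,b$: $D(a)a=a$, $aR(a)=a$; $D(ab)=D(aD(b))$, $R(ab)=R(R(a)b)$; $D(ab)=D(a)D(ab)D(a)$, $R(ab)=R(b)R(ab)R(b)$; $R(D(a))=D(a)$, $D(R(a))=R(a)$. An Ehresmann semigroup is a DRC-semigroup additionally satisfying $D(a)D(b)=D(b)D(a)$ and $R(a)R(b)=R(b)R(a)$ for all $a,b$. Projections $\mathbf P(S)=\{D(a):a\in S\}$ are ordered by $p\le q\iff p=pq=qp$. On $S$ define $a\le_l b\iff a=pb$ for some $p\in\mathbf P(S)$ with $p\le D(b)$, and $a\le_r b\iff a=bq$ for some $q\in\mathbf P(S)$ with $q\le R(b)$. *)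

theory Defs
  imports Main
begin

definition DRC_semigroup :: "('a::semigroup_mult \<Rightarrow> 'a) \<Rightarrow> ('a \<Rightarrow> 'a) \<Rightarrow> bool" where
  "DRC_semigroup D R \<longleftrightarrow>
     (\<forall>a. D a * a = a) \<and> (\<forall>a. a * R a = a) \<and>
     (\<forall>a b. D (a * b) = D (a * D b)) \<and> (\<forall>a b. R (a * b) = R (R a * b)) \<and>
     (\<forall>a b. D (a * b) = D a * D (a * b) * D a) \<and>
     (\<forall>a b. R (a * b) = R b * R (a * b) * R b) \<and>
     (\<forall>a. R (D a) = D a) \<and> (\<forall>a. D (R a) = R a)"

definition Ehresmann_semigroup :: "('a::semigroup_mult \<Rightarrow> 'a) \<Rightarrow> ('a \<Rightarrow> 'a) \<Rightarrow> bool" where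
  "Ehresmann_semigroup D R \<longleftrightarrow> DRC_semigroup D R \<and>
     (\<forall>a b. D a * D b = D b * D a) \<and> (\<forall>a b. R a * R b = R b * R a)"

definition projections :: "('a::semigroup_mult \<Rightarrow> 'a) \<Rightarrow> 'a set" where
  "projections D = range D"

definition proj_le :: "'a::semigroup_mult \<Rightarrow> 'a \<Rightarrow> bool" where
  "proj_le p q \<longleftrightarrow> p = p * q \<and> p = q * p"

definition le_l :: "('a::semigroup_mult \<Rightarrow> 'a) \<Rightarrow> 'a rel" where
  "le_l D = {(a, b). \<exists>p \<in> projections D. proj_le p (D b) \<and> a = p * b}"

definition le_r :: "('a::semigroup_mult \<Rightarrow> 'a) \<Rightarrow> ('a \<Rightarrow> 'a) \<Rightarrow> 'a rel" where
  "le_r D R = {(a, b). \<exists>q \<in> projections D. proj_le q (R b) \<and> a = b * q}"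

end

theory Submission
  imports Defs
begin

text \<open>
  In an Ehresmann semigroup the projections form a commutative subsemigroup of idempotents.
  Hence every product \<open>p * b\<close> with a projection \<open>p\<close> lies below \<open>b\<close> for \<open>\<le>\<^sub>l\<close>, with the witness
  \<open>p * D b \<le> D b\<close>, and dually \<open>b * q \<le>\<^sub>r b\<close>. So \<open>\<le>\<^sub>l\<close> and \<open>\<le>\<^sub>r\<close> are just left and right
  multiplication by projections, and both composites consist of the pairs \<open>(p * b * q, b)\<close>.
\<close>

locale drc_semigroup =
  fixes D R :: "'a::semigroup_mult \<Rightarrow> 'a"
  assumes drc: "DRC_semigroup D R"
begin

lemma D_mult_self: "D a * a = a"
  using drc by (simp add: DRC_semigroup_def)

lemma mult_R_self: "a * R a = a"
  using drc by (simp add: DRC_semigroup_def)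

lemma D_mult_sandwich: "D (a * b) = D a * D (a * b) * D a"
  using drc by (simp add: DRC_semigroup_def)

lemma R_D: "R (D a) = D a"
  using drc by (simp add: DRC_semigroup_def)

lemma D_R: "D (R a) = R a"
  using drc by (simp add: DRC_semigroup_def)

lemma D_D: "D (D a) = D a"
  by (metis R_D D_R)

lemma projections_iff: "p \<in> projections D \<longleftrightarrow> D p = p"
  unfolding projections_def by (metis D_D rangeE rangeI)

lemma R_in_projections: "R a \<in> projections D"
  by (simp add: projections_iff D_R)

lemma projection_idem: "p \<in> projections D \<Longrightarrow> p * p = p"
  by (metis D_mult_self projections_iff)

lemma D_mult_mult_D: "D (a * b) * D a = D (a * b)"
proof -
  have "D a * D a = D a"
    by (simp add: projection_idem projections_def)
  then show ?thesis
    by (metis D_mult_sandwich mult.assoc)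
qed

end

(* Commutativity of the R a need not be assumed: R a = D (R a). *)
locale ehresmann_semigroup = drc_semigroup +
  assumes D_commute: "D a * D b = D b * D a"
begin

lemma projections_commute: "p \<in> projections D \<Longrightarrow> q \<in> projections D \<Longrightarrow> p * q = q * p"
  unfolding projections_def using D_commute by auto

lemma mult_in_projections:
  assumes p: "p \<in> projections D" and q: "q \<in> projections D"
  shows "p * q \<in> projections D"
proof -
  have "D (p * q) * p = D (p * q)" and "D (q * p) * q = D (q * p)"
    using D_mult_mult_D p q by (metis projections_iff)+
  then have "D (p * q) * (p * q) = D (p * q)"
    using projections_commute[OF p q] by (metis mult.assoc)
  then have "p * q = D (p * q)"
    by (simp add: D_mult_self)
  then show ?thesis
    by (simp add: projections_iff)
qed

lemma proj_le_mult_left: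
  assumes "p \<in> projections D" and "q \<in> projections D"
  shows "proj_le (p * q) q"
  using assms projection_idem projections_commute
  unfolding proj_le_def by (metis mult.assoc)

lemma le_l_iff: "(a, b) \<in> le_l D \<longleftrightarrow> (\<exists>p \<in> projections D. a = p * b)"
proof
  assume "\<exists>p \<in> projections D. a = p * b"
  then obtain p where p: "p \<in> projections D" and a: "a = p * b"
    by blast
  have Db: "D b \<in> projections D"
    by (simp add: projections_def)
  have "a = (p * D b) * b"
    using a D_mult_self by (simp add: mult.assoc)
  then show "(a, b) \<in> le_l D"
    unfolding le_l_def using mult_in_projections[OF p Db] proj_le_mult_left[OF p Db] by blast
qed (auto simp: le_l_def)

lemma le_r_iff: "(a, b) \<in> le_r D R \<longleftrightarrow> (\<exists>q \<in> projections D. a = b * q)"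
proof
  assume "\<exists>q \<in> projections D. a = b * q"
  then obtain q where q: "q \<in> projections D" and a: "a = b * q"
    by blast
  have "a = b * (R b * q)"
    using a mult_R_self by (simp flip: mult.assoc)
  moreover have "proj_le (R b * q) (R b)"
    using proj_le_mult_left[OF q R_in_projections] projections_commute[OF q R_in_projections]
    by simp
  ultimately show "(a, b) \<in> le_r D R"
    unfolding le_r_def using mult_in_projections[OF R_in_projections q] by blast
qed (auto simp: le_r_def)

lemma le_l_O_le_r:
  "le_l D O le_r D R = {(p * b * q, b) | p b q. p \<in> projections D \<and> q \<in> projections D}"
  (is "_ = ?S")
proof (intro equalityI subsetI)
  fix x assume "x \<in> le_l D O le_r D R"
  then show "x \<in> ?S"
    by (force simp: le_l_iff le_r_iff mult.assoc)
next
  fix x assume "x \<in> ?S"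
  then obtain p b q where "x = (p * b * q, b)" "p \<in> projections D" "q \<in> projections D"
    by blast
  then show "x \<in> le_l D O le_r D R"
    by (metis le_l_iff le_r_iff mult.assoc relcompI)
qed

lemma le_r_O_le_l:
  "le_r D R O le_l D = {(p * b * q, b) | p b q. p \<in> projections D \<and> q \<in> projections D}"
  (is "_ = ?S")
proof (intro equalityI subsetI)
  fix x assume "x \<in> le_r D R O le_l D"
  then show "x \<in> ?S"
    by (force simp: le_l_iff le_r_iff mult.assoc)
next
  fix x assume "x \<in> ?S"
  then obtain p b q where "x = (p * b * q, b)" "p \<in> projections D" "q \<in> projections D"
    by blast
  then show "x \<in> le_r D R O le_l D"
    by (metis le_l_iff le_r_iff relcompI)
qed

end

lemma Ehresmann_semigroup_imp_locale:
  "Ehresmann_semigroup D R \<Longrightarrow> ehresmann_semigroup D R"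
  by unfold_locales (simp_all add: Ehresmann_semigroup_def)

theorem proposition10p3:
  fixes D R :: "'a::semigroup_mult \<Rightarrow> 'a"
  assumes "Ehresmann_semigroup D R"
  shows "le_l D O le_r D R = le_r D R O le_l D"
proof -
  interpret ehresmann_semigroup D R
    using assms by (rule Ehresmann_semigroup_imp_locale)
  show ?thesis
    by (simp only: le_l_O_le_r le_r_O_le_l)
qed

end
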